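(* Let $c \ge 0$ be a real number, $v\in U_n$ a unitary matrix, and $x\in M_n(\mathbb{C})$ a skew-adjoint matrix such that $\|x\|_\infty < \pi$, $v + v^{-1} \ge c\mathbf{1}$ and $(ve^x) + (ve^x)^{-1} \ge c\mathbf{1}$. Then $$(ve^{tx}) + (ve^{tx})^{-1} \ge c\mathbf{1}$$ for all $t \in [0, 1]$.
   Context: $U_n$ is the group of $n\times n$ unitary matrices, $\|x\|_\infty$ the operator norm, and $a\ge b$ for Hermitian matrices means $a-b$ is positive semidefinite. *)

theory Defs
  imports "HOL-Analysis.Analysis"
begin

type_synonym 'n cmat = "complex^'n^'n"

definition cadjoint :: "'n::finite cmat \<Rightarrow> 'n cmat" where
  "cadjoint A = (\<chi> i j. cnj (A $ j $ i))"

definition unitary :: "'n::finite cmat \<Rightarrow> bool" where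
  "unitary U \<longleftrightarrow> U ** cadjoint U = mat 1 \<and> cadjoint U ** U = mat 1"

definition skew_adjoint :: "'n::finite cmat \<Rightarrow> bool" where
  "skew_adjoint A \<longleftrightarrow> cadjoint A = - A"

definition hermitian :: "'n::finite cmat \<Rightarrow> bool" where
  "hermitian A \<longleftrightarrow> cadjoint A = A"

definition psd :: "'n::finite cmat \<Rightarrow> bool" where
  "psd A \<longleftrightarrow> hermitian A \<and>
     (\<forall>z::complex^'n. 0 \<le> Re (\<Sum>i\<in>UNIV. \<Sum>j\<in>UNIV. cnj (z $ i) * A $ i $ j * z $ j))"

definition loewner_ge :: "'n::finite cmat \<Rightarrow> 'n cmat \<Rightarrow> bool" where
  "loewner_ge A B \<longleftrightarrow> psd (A - B)"

fun mat_pow :: "'n::finite cmat \<Rightarrow> nat \<Rightarrow> 'n cmat" where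
  "mat_pow A 0 = mat 1"
| "mat_pow A (Suc k) = A ** mat_pow A k"

definition mat_exp :: "'n::finite cmat \<Rightarrow> 'n cmat" where
  "mat_exp A = (\<Sum>k. (1 / fact k) *\<^sub>R mat_pow A k)"

definition op_norm :: "'n::finite cmat \<Rightarrow> real" where
  "op_norm A = onorm (\<lambda>z::complex^'n. A *v z)"

end

theory Submission
  imports Defs
begin

text \<open>Diagonalise the skew-adjoint \<open>x = U diag (i \<theta>) U\<^sup>*\<close>. Then \<open>|\<theta>\<^sub>k| \<le> \<parallel>x\<parallel> < \<pi>\<close>, and
  \<open>v e\<^sup>t\<^sup>x\<close> is unitarily conjugate to \<open>w D\<^sub>t\<close> with \<open>w = U\<^sup>* v U\<close> and
  \<open>D\<^sub>t = diag (e\<^sup>i\<^sup>t\<^sup>\<theta>)\<close>. For a unitary \<open>u\<close>, \<open>u + u\<^sup>-\<^sup>1 \<ge> c\<close> says exactly that the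
  numerical range of \<open>u\<close> lies in the half-plane \<open>Re \<ge> c/2\<close>. The set of \<open>t \<in> [0, 1]\<close> for
  which \<open>w D\<^sub>t\<close> has this property is closed and contains \<open>0\<close> and \<open>1\<close>, so it suffices to
  show that it is midpoint convex: if the numerical ranges of \<open>w\<close> and \<open>w D\<^sup>2\<close> lie in
  \<open>Re \<ge> a\<close>, where \<open>D\<close> is diagonal unitary with \<open>Re D > 0\<close>, then so does that of \<open>w D\<close>.
  This follows from
  \<open>1/\<gamma> = (2/\<pi>) \<integral>\<^sub>0\<^sup>1 (1 / (1 + \<rho>\<^sup>2 \<gamma>\<^sup>2) + 1 / (\<rho>\<^sup>2 + \<gamma>\<^sup>2)) d\<rho>\<close> for \<open>Re \<gamma> > 0\<close>,
  applied to the conjugated diagonal entries \<open>\<gamma>\<close> of \<open>D\<close>: each integrand is a positive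
  combination of the quadratic forms of \<open>w\<close> and \<open>w D\<^sup>2\<close> at rescaled vectors.\<close>

section \<open>Quadratic forms and unitary matrices\<close>

definition cinner :: "complex^'n::finite \<Rightarrow> complex^'n \<Rightarrow> complex" where
  "cinner z w = (\<Sum>i\<in>UNIV. cnj (z $ i) * w $ i)"

definition quad_form :: "'n::finite cmat \<Rightarrow> complex^'n \<Rightarrow> complex" where
  "quad_form W z = (\<Sum>i\<in>UNIV. \<Sum>j\<in>UNIV. cnj (z $ i) * W $ i $ j * z $ j)"

definition num_range_Re_ge :: "real \<Rightarrow> 'n::finite cmat \<Rightarrow> bool" where
  "num_range_Re_ge a W \<longleftrightarrow> (\<forall>z. a * (norm z)\<^sup>2 \<le> Re (quad_form W z))"

lemma quad_form_eq_cinner: "quad_form W z = cinner z (W *v z)"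
  by (simp add: quad_form_def cinner_def matrix_vector_mult_def sum_distrib_left mult.assoc)

lemma cinner_adjoint: "cinner z (A *v y) = cinner (cadjoint A *v z) y"
proof -
  have "cinner z (A *v y) = (\<Sum>i\<in>UNIV. \<Sum>j\<in>UNIV. cnj (z $ i) * A $ i $ j * y $ j)"
    by (simp add: cinner_def matrix_vector_mult_def sum_distrib_left mult.assoc)
  also have "\<dots> = (\<Sum>j\<in>UNIV. \<Sum>i\<in>UNIV. cnj (z $ i) * A $ i $ j * y $ j)"
    by (rule sum.swap)
  also have "\<dots> = cinner (cadjoint A *v z) y"
    by (simp add: cinner_def matrix_vector_mult_def cadjoint_def sum_distrib_left mult_ac)
  finally show ?thesis .
qed

lemma cinner_self: "cinner z z = of_real ((norm z)\<^sup>2)"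
proof -
  have "cnj a * a = of_real ((cmod a)\<^sup>2)" for a
    by (subst complex_norm_square) (simp add: mult.commute)
  then show ?thesis
    by (simp add: cinner_def norm_vec_def L2_set_def sum_nonneg)
qed

lemma inner_eq_Re_cinner: "inner z w = Re (cinner z w)"
  by (simp add: inner_vec_def cinner_def inner_complex_def Re_sum)

lemma cinner_commute: "cinner w z = cnj (cinner z w)"
  by (simp add: cinner_def mult.commute)

lemma cinner_add_left: "cinner (a + b) c = cinner a c + cinner b c"
  by (simp add: cinner_def algebra_simps sum.distrib)

lemma cinner_add_right: "cinner c (a + b) = cinner c a + cinner c b"
  by (simp add: cinner_def algebra_simps sum.distrib)

lemma cinner_scaleR_left: "cinner (r *\<^sub>R a) b = r *\<^sub>R cinner a b"
  by (simp add: cinner_def scaleR_sum_right)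

lemma cinner_scaleR_right: "cinner a (r *\<^sub>R b) = r *\<^sub>R cinner a b"
  by (simp add: cinner_def scaleR_sum_right)

lemma cinner_add_scaleR:
  "cinner (a + e *\<^sub>R b) (c + e *\<^sub>R d) =
    cinner a c + e *\<^sub>R (cinner a d + cinner b c) + (e * e) *\<^sub>R cinner b d"
  by (simp add: cinner_add_left cinner_add_right cinner_scaleR_left cinner_scaleR_right
      scaleR_add_right)

lemma hermitian_cinner: "hermitian H \<Longrightarrow> cinner z (H *v w) = cinner (H *v z) w"
  by (simp add: cinner_adjoint hermitian_def)

lemma matrix_vector_mult_scaleR_complex: "(A::'n::finite cmat) *v (r *\<^sub>R z) = r *\<^sub>R (A *v z)"
  by (simp add: matrix_vector_mult_def vec_eq_iff scaleR_sum_right)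

lemma cadjoint_cadjoint [simp]: "cadjoint (cadjoint A) = A"
  by (simp add: cadjoint_def vec_eq_iff)

lemma cadjoint_matrix_mul: "cadjoint (A ** B) = cadjoint B ** cadjoint A"
  by (simp add: cadjoint_def vec_eq_iff matrix_matrix_mult_def mult.commute)

lemma cadjoint_add: "cadjoint (A + B) = cadjoint A + cadjoint B"
  by (simp add: cadjoint_def vec_eq_iff)

lemma cadjoint_diff: "cadjoint (A - B) = cadjoint A - cadjoint B"
  by (simp add: cadjoint_def vec_eq_iff)

lemma cadjoint_scaleR_mat: "cadjoint (c *\<^sub>R mat 1 :: 'n::finite cmat) = c *\<^sub>R mat 1"
  by (simp add: cadjoint_def vec_eq_iff mat_def)

lemma unitary_matrix_inv:
  assumes "unitary U" shows "matrix_inv U = cadjoint U"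
proof -
  have "U ** matrix_inv U = mat 1 \<and> matrix_inv U ** U = mat 1"
    unfolding matrix_inv_def
    by (rule someI[of _ "cadjoint U"]) (use assms in \<open>simp add: unitary_def\<close>)
  then show ?thesis
    using assms unfolding unitary_def by (metis matrix_mul_assoc matrix_mul_rid)
qed

lemma unitary_matrix_mul: "unitary A \<Longrightarrow> unitary B \<Longrightarrow> unitary (A ** B)"
  unfolding unitary_def cadjoint_matrix_mul by (metis matrix_mul_assoc matrix_mul_rid)

lemma unitary_cadjoint: "unitary A \<Longrightarrow> unitary (cadjoint A)"
  unfolding unitary_def by simp

lemma unitaryI_left: "cadjoint U ** U = mat 1 \<Longrightarrow> unitary U"
  unfolding unitary_def using matrix_left_right_inverse by blast

lemma unitary_conj_mult:
  assumes "unitary U"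
  shows "(U ** A ** cadjoint U) ** (U ** B ** cadjoint U) = U ** (A ** B) ** cadjoint U"
proof -
  have "(U ** A ** cadjoint U) ** (U ** B ** cadjoint U) =
      U ** A ** (cadjoint U ** U) ** B ** cadjoint U"
    by (simp add: matrix_mul_assoc)
  also have "\<dots> = U ** (A ** B) ** cadjoint U"
    using assms by (simp add: unitary_def matrix_mul_assoc)
  finally show ?thesis .
qed

lemma unitary_conj_cancel:
  assumes "unitary U"
  shows "U ** (cadjoint U ** A ** U) ** cadjoint U = A"
proof -
  have "U ** (cadjoint U ** A ** U) ** cadjoint U = (U ** cadjoint U) ** A ** (U ** cadjoint U)"
    by (simp add: matrix_mul_assoc)
  then show ?thesis
    using assms by (simp add: unitary_def)
qed

lemma norm_unitary_mult:
  assumes "unitary U" shows "norm (U *v z) = norm z"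
proof -
  have "cinner (U *v z) (U *v z) = cinner z z"
    using assms by (simp add: cinner_adjoint unitary_def matrix_vector_mul_assoc)
  then have "(norm (U *v z))\<^sup>2 = (norm z)\<^sup>2"
    unfolding cinner_self of_real_eq_iff .
  then show ?thesis by (simp add: power2_eq_iff_nonneg)
qed

lemma quad_form_add: "quad_form (A + B) z = quad_form A z + quad_form B z"
  by (simp add: quad_form_def algebra_simps sum.distrib)

lemma quad_form_diff: "quad_form (A - B) z = quad_form A z - quad_form B z"
  by (simp add: quad_form_def algebra_simps sum_subtractf)

lemma quad_form_scaleR_mat:
  fixes z :: "complex^'n::finite"
  shows "quad_form (c *\<^sub>R mat 1) z = of_real (c * (norm z)\<^sup>2)"
proof -
  have mv: "(c *\<^sub>R mat 1 :: 'n cmat) *v z = c *\<^sub>R (mat 1 *v z)"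
    by (simp add: matrix_vector_mult_def vec_eq_iff scaleR_sum_right)
  show ?thesis
    unfolding quad_form_eq_cinner mv matrix_vector_mul_lid cinner_scaleR_right cinner_self
    by (simp add: scaleR_conv_of_real)
qed

lemma quad_form_cadjoint: "quad_form (cadjoint A) z = cnj (quad_form A z)"
  unfolding quad_form_eq_cinner cinner_adjoint[of z "cadjoint A"] cadjoint_cadjoint
  by (rule cinner_commute)

lemma loewner_ge_unitary_iff:
  assumes "unitary u"
  shows "loewner_ge (u + matrix_inv u) (c *\<^sub>R mat 1) \<longleftrightarrow> num_range_Re_ge (c / 2) u"
proof -
  have "hermitian (u + cadjoint u - c *\<^sub>R mat 1)"
    unfolding hermitian_def cadjoint_add cadjoint_diff cadjoint_scaleR_mat by simp
  then have "loewner_ge (u + matrix_inv u) (c *\<^sub>R mat 1) \<longleftrightarrow>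
      (\<forall>z. 0 \<le> Re (quad_form (u + cadjoint u - c *\<^sub>R mat 1) z))"
    unfolding loewner_ge_def psd_def unitary_matrix_inv[OF assms] quad_form_def by blast
  also have "\<dots> \<longleftrightarrow> num_range_Re_ge (c / 2) u"
    by (simp add: num_range_Re_ge_def quad_form_add quad_form_diff quad_form_scaleR_mat
        quad_form_cadjoint field_simps)
  finally show ?thesis .
qed

lemma num_range_Re_ge_unitary_conj:
  assumes "unitary U"
  shows "num_range_Re_ge a (U ** M ** cadjoint U) \<longleftrightarrow> num_range_Re_ge a M"
proof -
  have form: "quad_form (U ** M ** cadjoint U) z = quad_form M (cadjoint U *v z)" for z
    unfolding quad_form_eq_cinner by (simp add: matrix_vector_mul_assoc[symmetric] cinner_adjoint)
  have surj: "(\<forall>z. P (cadjoint U *v z)) \<longleftrightarrow> (\<forall>y. P y)" for P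
    using assms unfolding unitary_def by (metis matrix_vector_mul_assoc matrix_vector_mul_lid)
  have "num_range_Re_ge a (U ** M ** cadjoint U) \<longleftrightarrow>
      (\<forall>z. a * (norm (cadjoint U *v z))\<^sup>2 \<le> Re (quad_form M (cadjoint U *v z)))"
    unfolding num_range_Re_ge_def form norm_unitary_mult[OF unitary_cadjoint[OF assms]] ..
  also have "\<dots> \<longleftrightarrow> num_range_Re_ge a M"
    unfolding num_range_Re_ge_def by (rule surj)
  finally show ?thesis .
qed

lemma loewner_ge_unitary_conj_iff:
  assumes "unitary U" "unitary M"
  shows "loewner_ge (U ** M ** cadjoint U + matrix_inv (U ** M ** cadjoint U)) (c *\<^sub>R mat 1)
    \<longleftrightarrow> num_range_Re_ge (c / 2) M"
  using assms
  by (simp add: loewner_ge_unitary_iff num_range_Re_ge_unitary_conj unitary_matrix_mul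
      unitary_cadjoint)

definition diag_mat :: "('n::finite \<Rightarrow> complex) \<Rightarrow> 'n cmat" where
  "diag_mat d = (\<chi> i j. if i = j then d i else 0)"

lemma matrix_mul_diag_mat_nth: "(A ** diag_mat d) $ i $ j = A $ i $ j * d j"
proof -
  have "(A ** diag_mat d) $ i $ j = (\<Sum>k\<in>UNIV. A $ i $ k * (if k = j then d k else 0))"
    unfolding matrix_matrix_mult_def diag_mat_def by simp
  also have "\<dots> = (\<Sum>k\<in>UNIV. if k = j then A $ i $ k * d k else 0)"
    by (rule sum.cong) auto
  finally show ?thesis by simp
qed

lemma diag_mat_conj_nth: "(U ** diag_mat d ** V) $ i $ j = (\<Sum>k\<in>UNIV. U $ i $ k * d k * V $ k $ j)"
  by (simp add: matrix_matrix_mult_def[of "U ** diag_mat d"] matrix_mul_diag_mat_nth)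

lemma diag_mat_mult: "diag_mat d ** diag_mat e = diag_mat (\<lambda>i. d i * e i)"
  by (simp add: vec_eq_iff matrix_mul_diag_mat_nth) (simp add: diag_mat_def)

lemma diag_mat_one: "diag_mat (\<lambda>i. 1) = mat 1"
  by (simp add: diag_mat_def mat_def)

lemma scaleR_diag_mat_conj: "r *\<^sub>R (U ** diag_mat d ** V) = U ** diag_mat (\<lambda>i. r *\<^sub>R d i) ** V"
  by (simp add: vec_eq_iff diag_mat_conj_nth scaleR_sum_right)

lemma cadjoint_diag_mat: "cadjoint (diag_mat d) = diag_mat (\<lambda>i. cnj (d i))"
  by (simp add: cadjoint_def diag_mat_def vec_eq_iff)

lemma unitary_diag_mat:
  assumes "\<And>i. cmod (d i) = 1" shows "unitary (diag_mat d)"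
proof (rule unitaryI_left)
  have "cnj (d i) * d i = 1" for i
    using assms[of i] complex_norm_square[of "d i"] by (simp add: mult.commute)
  then show "cadjoint (diag_mat d) ** diag_mat d = mat 1"
    by (simp add: cadjoint_diag_mat diag_mat_mult diag_mat_one)
qed

lemma quad_form_mult_diag_mat:
  "quad_form (W ** diag_mat d) z = (\<Sum>k\<in>UNIV. (\<Sum>j\<in>UNIV. cnj (z $ j) * W $ j $ k) * z $ k * d k)"
proof -
  have "quad_form (W ** diag_mat d) z = (\<Sum>j\<in>UNIV. \<Sum>k\<in>UNIV. cnj (z $ j) * W $ j $ k * z $ k * d k)"
    unfolding quad_form_def matrix_mul_diag_mat_nth by (simp add: mult_ac)
  also have "\<dots> = (\<Sum>k\<in>UNIV. \<Sum>j\<in>UNIV. cnj (z $ j) * W $ j $ k * z $ k * d k)"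
    by (rule sum.swap)
  finally show ?thesis
    by (simp add: sum_distrib_right)
qed

section \<open>Spectral theorem for Hermitian matrices\<close>

lemma exists_nonzero_orthogonal:
  fixes E :: "(complex^'n::finite) set"
  assumes "finite E" "card E < CARD('n)"
  shows "\<exists>z. z \<noteq> 0 \<and> (\<forall>e\<in>E. cinner e z = 0)"
proof -
  define B where "B = E \<union> (\<lambda>e. \<i> *s e) ` E"
  have "finite B" using assms by (simp add: B_def)
  have "card B \<le> card E + card E"
    using card_Un_le[of E "(\<lambda>e. \<i> *s e) ` E"] card_image_le[OF assms(1), of "\<lambda>e. \<i> *s e"]
    unfolding B_def by linarith
  then have "dim B < DIM(complex^'n)"
    using assms dim_le_card'[OF \<open>finite B\<close>] by simp
  then obtain z where z: "z \<noteq> 0" "\<And>y. y \<in> span B \<Longrightarrow> orthogonal z y"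
    using orthogonal_to_subspace_exists by blast
  have "cinner e z = 0" if "e \<in> E" for e
  proof -
    have "orthogonal z e" "orthogonal z (\<i> *s e)"
      using z(2) that by (auto simp: B_def span_base)
    then have "Re (cinner z e) = 0" "Re (cinner z (\<i> *s e)) = 0"
      by (simp_all add: orthogonal_def inner_eq_Re_cinner)
    moreover have "cinner z (\<i> *s e) = \<i> * cinner z e"
      by (simp add: cinner_def sum_distrib_left mult.left_commute)
    ultimately have "cinner z e = 0"
      by (simp add: complex_eq_iff)
    then show ?thesis
      by (simp add: cinner_commute[of e])
  qed
  with z show ?thesis by blast
qed

lemma le_quadratic_imp_nonpos:
  fixes b c :: real
  assumes "\<And>e. e > 0 \<Longrightarrow> b * e \<le> c * e\<^sup>2"
  shows "b \<le> 0"
proof (rule ccontr)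
  assume "\<not> b \<le> 0"
  define e where "e = b / (\<bar>c\<bar> + 1)"
  have "e > 0" using \<open>\<not> b \<le> 0\<close> by (simp add: e_def add_pos_nonneg)
  have "b * e \<le> c * e\<^sup>2" by (rule assms) fact
  also have "\<dots> < (\<bar>c\<bar> + 1) * e\<^sup>2"
    using \<open>e > 0\<close> by (intro mult_strict_right_mono) auto
  also have "\<dots> = b * e"
    by (simp add: e_def power2_eq_square add_pos_nonneg)
  finally show False by simp
qed

text \<open>Moving from the maximiser \<open>z\<^sub>0\<close> in the direction of the residual
  \<open>r = H z\<^sub>0 - \<mu> z\<^sub>0\<close> would increase the Rayleigh quotient to first order unless \<open>r = 0\<close>.\<close>
lemma hermitian_Rayleigh_max_eigenvector:
  fixes H :: "'n::finite cmat"
  assumes herm: "hermitian H" and S: "subspace S" and invariant: "\<And>s. s \<in> S \<Longrightarrow> H *v s \<in> S"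
    and z0: "z\<^sub>0 \<in> S" "norm z\<^sub>0 = 1"
    and max: "\<And>w. w \<in> S \<Longrightarrow> Re (quad_form H w) \<le> Re (quad_form H z\<^sub>0) * (norm w)\<^sup>2"
  shows "H *v z\<^sub>0 = Re (quad_form H z\<^sub>0) *\<^sub>R z\<^sub>0"
proof -
  define R where "R w = Re (cinner w (H *v w))" for w
  define \<mu> where "\<mu> = R z\<^sub>0"
  define r where "r = H *v z\<^sub>0 - \<mu> *\<^sub>R z\<^sub>0"
  have r: "r \<in> S" unfolding r_def using S invariant z0 by (simp add: subspace_diff subspace_scale)
  have "2 * (norm r)\<^sup>2 * e \<le> (\<mu> * (norm r)\<^sup>2 - R r) * e\<^sup>2" if "e > 0" for e
  proof -
    have Hz0_eq: "H *v z\<^sub>0 = r + \<mu> *\<^sub>R z\<^sub>0" by (simp add: r_def)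
    have Hr: "cinner z\<^sub>0 (H *v r) = cinner r r + \<mu> *\<^sub>R cinner z\<^sub>0 r"
      unfolding hermitian_cinner[OF herm] Hz0_eq by (simp add: cinner_add_left cinner_scaleR_left)
    have Hz0: "cinner r (H *v z\<^sub>0) = cinner r r + \<mu> *\<^sub>R cinner r z\<^sub>0"
      unfolding Hz0_eq by (simp add: cinner_add_right cinner_scaleR_right)
    have sym: "Re (cinner z\<^sub>0 r) = Re (cinner r z\<^sub>0)" by (simp add: cinner_commute[of z\<^sub>0])
    have R_expand: "R (z\<^sub>0 + e *\<^sub>R r) =
        \<mu> + e * (2 * (norm r)\<^sup>2 + 2 * \<mu> * Re (cinner r z\<^sub>0)) + e * e * R r"
      using Hr Hz0 sym
      by (simp add: R_def \<mu>_def matrix_vector_right_distrib matrix_vector_mult_scaleR_complex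
          cinner_add_scaleR cinner_self)
    have "(norm (z\<^sub>0 + e *\<^sub>R r))\<^sup>2 = Re (cinner (z\<^sub>0 + e *\<^sub>R r) (z\<^sub>0 + e *\<^sub>R r))"
      by (simp add: cinner_self)
    also have "\<dots> = 1 + e * (2 * Re (cinner r z\<^sub>0)) + e * e * (norm r)\<^sup>2"
      unfolding cinner_add_scaleR using sym z0(2) by (simp add: cinner_self)
    finally have norm_expand: "(norm (z\<^sub>0 + e *\<^sub>R r))\<^sup>2 =
        1 + e * (2 * Re (cinner r z\<^sub>0)) + e * e * (norm r)\<^sup>2" .
    have "R (z\<^sub>0 + e *\<^sub>R r) \<le> \<mu> * (norm (z\<^sub>0 + e *\<^sub>R r))\<^sup>2"
      using max[of "z\<^sub>0 + e *\<^sub>R r"] S z0 r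
      by (simp add: R_def \<mu>_def quad_form_eq_cinner subspace_add subspace_scale)
    then show ?thesis
      unfolding R_expand norm_expand by (simp add: algebra_simps power2_eq_square)
  qed
  then have "2 * (norm r)\<^sup>2 \<le> 0" by (rule le_quadratic_imp_nonpos)
  then have "r = 0" by simp
  then show ?thesis by (simp add: r_def \<mu>_def R_def quad_form_eq_cinner)
qed

lemma hermitian_eigenvector_in_invariant_subspace:
  fixes H :: "'n::finite cmat"
  assumes herm: "hermitian H" and S: "subspace S" and invariant: "\<And>s. s \<in> S \<Longrightarrow> H *v s \<in> S"
    and nontrivial: "y \<in> S" "y \<noteq> 0"
  shows "\<exists>z \<mu>. z \<in> S \<and> norm z = 1 \<and> H *v z = \<mu> *\<^sub>R z"
proof -
  define K where "K = sphere 0 1 \<inter> S"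
  have "compact K"
    unfolding K_def using S by (simp add: compact_Int_closed closed_subspace)
  moreover have "(1 / norm y) *\<^sub>R y \<in> K"
    using nontrivial S by (simp add: K_def subspace_scale)
  moreover have "continuous_on K (\<lambda>w. Re (quad_form H w))"
    unfolding quad_form_def by (intro continuous_intros)
  ultimately obtain z\<^sub>0 where z0: "z\<^sub>0 \<in> K"
    and z0_max: "\<And>w. w \<in> K \<Longrightarrow> Re (quad_form H w) \<le> Re (quad_form H z\<^sub>0)"
    using continuous_attains_sup[of K] by blast
  have "Re (quad_form H w) \<le> Re (quad_form H z\<^sub>0) * (norm w)\<^sup>2" if "w \<in> S" for w
  proof (cases "w = 0")
    case True then show ?thesis by (simp add: quad_form_def)
  next
    case False
    have "(1 / norm w) *\<^sub>R w \<in> K" using that False S by (simp add: K_def subspace_scale)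
    moreover have "Re (quad_form H ((1 / norm w) *\<^sub>R w)) = (1 / norm w)\<^sup>2 * Re (quad_form H w)"
      by (simp add: quad_form_eq_cinner matrix_vector_mult_scaleR_complex
          cinner_scaleR_left cinner_scaleR_right power2_eq_square)
    ultimately have "(1 / norm w)\<^sup>2 * Re (quad_form H w) \<le> Re (quad_form H z\<^sub>0)"
      using z0_max by metis
    with False show ?thesis by (simp add: field_simps)
  qed
  then have "H *v z\<^sub>0 = Re (quad_form H z\<^sub>0) *\<^sub>R z\<^sub>0"
    using hermitian_Rayleigh_max_eigenvector[OF herm S invariant] z0 by (simp add: K_def)
  with z0 show ?thesis
    unfolding K_def by auto
qed

lemma hermitian_eigenvector_orthogonal:
  fixes H :: "'n::finite cmat" and E :: "(complex^'n) set"
  assumes herm: "hermitian H" and E: "finite E" "card E < CARD('n)"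
    and eigen: "\<And>e. e \<in> E \<Longrightarrow> \<exists>\<mu>::real. H *v e = \<mu> *\<^sub>R e"
  shows "\<exists>z (\<mu>::real). norm z = 1 \<and> H *v z = \<mu> *\<^sub>R z \<and> (\<forall>e\<in>E. cinner e z = 0)"
proof -
  define S where "S = {z. \<forall>e\<in>E. cinner e z = 0}"
  have "subspace S"
    by (auto simp: S_def subspace_def cinner_add_right cinner_scaleR_right)
      (simp add: cinner_def)
  moreover have "H *v s \<in> S" if "s \<in> S" for s
  proof -
    have "cinner e (H *v s) = 0" if "e \<in> E" for e
    proof -
      obtain \<mu> where "H *v e = \<mu> *\<^sub>R e" using eigen \<open>e \<in> E\<close> by blast
      then show ?thesis
        using \<open>s \<in> S\<close> \<open>e \<in> E\<close> by (simp add: hermitian_cinner[OF herm] cinner_scaleR_left S_def)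
    qed
    then show ?thesis by (simp add: S_def)
  qed
  moreover obtain y where "y \<noteq> 0" "y \<in> S"
    using exists_nonzero_orthogonal[OF E] by (auto simp: S_def)
  ultimately show ?thesis
    using hermitian_eigenvector_in_invariant_subspace[OF herm] by (simp add: S_def) blast
qed

lemma hermitian_orthonormal_eigenvectors_on:
  fixes H :: "'n::finite cmat" and I :: "'n set"
  assumes herm: "hermitian H"
  shows "\<exists>e (\<mu>::'n \<Rightarrow> real). (\<forall>i\<in>I. norm (e i) = 1 \<and> H *v e i = \<mu> i *\<^sub>R e i) \<and>
           (\<forall>i\<in>I. \<forall>j\<in>I. i \<noteq> j \<longrightarrow> cinner (e i) (e j) = 0)"
  using finite[of I]
proof (induction I rule: finite_induct)
  case empty then show ?case by simp
next
  case (insert k I)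
  obtain e \<mu> where eigen: "\<forall>i\<in>I. norm (e i) = 1 \<and> H *v e i = (\<mu> i::real) *\<^sub>R e i"
    and orth: "\<forall>i\<in>I. \<forall>j\<in>I. i \<noteq> j \<longrightarrow> cinner (e i) (e j) = 0"
    using insert.IH by (elim exE conjE) (rule that)
  have "card (e ` I) \<le> card I" by (rule card_image_le[OF insert(1)])
  also have "card I < CARD('n)" using insert(2) by (intro psubset_card_mono) auto
  finally obtain z \<nu> where z: "norm z = 1" "H *v z = (\<nu>::real) *\<^sub>R z" "\<forall>x\<in>e ` I. cinner x z = 0"
    using hermitian_eigenvector_orthogonal[OF herm, of "e ` I"] insert(1) eigen by blast
  moreover have "\<forall>i\<in>I. cinner z (e i) = 0"
    using z(3) by (simp add: cinner_commute[of z "e i" for i])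
  ultimately have "\<forall>i\<in>insert k I. norm ((e(k := z)) i) = 1 \<and>
      H *v (e(k := z)) i = (\<mu>(k := \<nu>)) i *\<^sub>R (e(k := z)) i"
    and "\<forall>i\<in>insert k I. \<forall>j\<in>insert k I. i \<noteq> j \<longrightarrow> cinner ((e(k := z)) i) ((e(k := z)) j) = 0"
    using eigen orth insert(2) by auto
  then show ?case by blast
qed

lemma hermitian_unitary_diagonalization:
  fixes H :: "'n::finite cmat"
  assumes "hermitian H"
  shows "\<exists>U (\<mu>::'n \<Rightarrow> real). unitary U \<and> H = U ** diag_mat (\<lambda>k. of_real (\<mu> k)) ** cadjoint U"
proof -
  obtain e :: "'n \<Rightarrow> complex^'n" and \<mu> :: "'n \<Rightarrow> real"
    where eigen: "\<And>i. norm (e i) = 1" "\<And>i. H *v e i = \<mu> i *\<^sub>R e i"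
      and orth: "\<And>i j. i \<noteq> j \<Longrightarrow> cinner (e i) (e j) = 0"
    using hermitian_orthonormal_eigenvectors_on[OF assms, of UNIV]
    by (elim exE conjE) (rule that; auto)
  define U :: "'n cmat" where "U = (\<chi> i k. e k $ i)"
  have "(cadjoint U ** U) $ k $ l = cinner (e k) (e l)" for k l
    by (simp add: U_def cadjoint_def matrix_matrix_mult_def cinner_def)
  then have "cadjoint U ** U = mat 1"
    using eigen(1) orth by (simp add: vec_eq_iff mat_def cinner_self)
  then have U: "unitary U" by (rule unitaryI_left)
  have "(H ** U) $ i $ k = (H *v e k) $ i" for i k
    by (simp add: U_def matrix_matrix_mult_def matrix_vector_mult_def)
  then have "H ** U = U ** diag_mat (\<lambda>k. of_real (\<mu> k))"
    using eigen(2) by (simp add: vec_eq_iff matrix_mul_diag_mat_nth U_def of_real_def mult.commute)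
  then have "H = U ** diag_mat (\<lambda>k. of_real (\<mu> k)) ** cadjoint U"
    using U unfolding unitary_def by (metis matrix_mul_assoc matrix_mul_rid)
  with U show ?thesis by (intro exI conjI)
qed

section \<open>Exponentials of skew-adjoint matrices\<close>

lemma mat_pow_diag_mat: "mat_pow (diag_mat d) k = diag_mat (\<lambda>i. d i ^ k)"
  by (induction k) (simp_all add: diag_mat_one diag_mat_mult)

lemma mat_pow_unitary_conj:
  assumes "unitary U"
  shows "mat_pow (U ** D ** cadjoint U) k = U ** mat_pow D k ** cadjoint U"
proof (induction k)
  case 0
  then show ?case using assms by (simp add: unitary_def)
next
  case (Suc k)
  then show ?case
    using unitary_conj_mult[OF assms] by simp
qed

lemma sums_matrixI:
  fixes F :: "nat \<Rightarrow> 'a::real_normed_vector^'n::finite^'m::finite"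
  assumes "\<And>i j. (\<lambda>k. F k $ i $ j) sums (L $ i $ j)"
  shows "F sums L"
  using assms unfolding sums_def by (auto intro!: vec_tendstoI)

lemma mat_exp_unitary_diag:
  assumes "unitary U"
  shows "mat_exp (U ** diag_mat d ** cadjoint U) = U ** diag_mat (\<lambda>i. exp (d i)) ** cadjoint U"
proof -
  have "(\<lambda>k. (1 / fact k) *\<^sub>R mat_pow (U ** diag_mat d ** cadjoint U) k)
      sums (U ** diag_mat (\<lambda>i. exp (d i)) ** cadjoint U)"
  proof (rule sums_matrixI)
    fix r c
    have "(\<lambda>k. (1 / fact k) *\<^sub>R d s ^ k) sums exp (d s)" for s
      using exp_converges[of "d s"] by (simp add: divide_inverse_commute)
    then have "(\<lambda>k. \<Sum>s\<in>UNIV. U $ r $ s * ((1 / fact k) *\<^sub>R d s ^ k) * cadjoint U $ s $ c)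
        sums (\<Sum>s\<in>UNIV. U $ r $ s * exp (d s) * cadjoint U $ s $ c)"
      by (intro sums_sum sums_mult sums_mult2)
    then show "(\<lambda>k. ((1 / fact k) *\<^sub>R mat_pow (U ** diag_mat d ** cadjoint U) k) $ r $ c)
        sums ((U ** diag_mat (\<lambda>i. exp (d i)) ** cadjoint U) $ r $ c)"
      unfolding mat_pow_unitary_conj[OF assms] mat_pow_diag_mat scaleR_diag_mat_conj
        diag_mat_conj_nth .
  qed
  then show ?thesis
    unfolding mat_exp_def by (rule sums_unique[symmetric])
qed

lemma norm_axis: "norm (axis k c :: 'a::real_normed_vector^'n::finite) = norm c"
proof -
  have "(norm (axis k c $ i))\<^sup>2 = (if i = k then (norm c)\<^sup>2 else 0)" for i
    by (simp add: axis_def)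
  then show ?thesis by (simp add: norm_vec_def L2_set_def)
qed

lemma diag_mat_mult_vector_nth: "(diag_mat d *v v) $ i = d i * v $ i"
proof -
  have "(diag_mat d *v v) $ i = (\<Sum>j\<in>UNIV. (if i = j then d i else 0) * v $ j)"
    unfolding matrix_vector_mult_def diag_mat_def by simp
  also have "\<dots> = (\<Sum>j\<in>UNIV. if i = j then d i * v $ j else 0)"
    by (rule sum.cong) auto
  finally show ?thesis by simp
qed

lemma norm_diag_entry_le_op_norm:
  assumes "unitary U"
  shows "cmod (d k) \<le> op_norm (U ** diag_mat d ** cadjoint U)"
proof -
  define u where "u = U *v axis k 1"
  have "cadjoint U *v u = axis k 1"
    using assms by (simp add: u_def unitary_def matrix_vector_mul_assoc)
  moreover have "diag_mat d *v axis k 1 = axis k (d k)"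
    by (simp add: vec_eq_iff diag_mat_mult_vector_nth axis_def)
  ultimately have "(U ** diag_mat d ** cadjoint U) *v u = U *v axis k (d k)"
    by (simp add: matrix_vector_mul_assoc[symmetric])
  then have "cmod (d k) = norm ((U ** diag_mat d ** cadjoint U) *v u)"
    by (simp add: norm_unitary_mult[OF assms] norm_axis)
  also have "\<dots> \<le> op_norm (U ** diag_mat d ** cadjoint U) * norm u"
    unfolding op_norm_def by (rule onorm) (rule matrix_vector_mul_bounded_linear)
  also have "norm u = 1"
    by (simp add: u_def norm_unitary_mult[OF assms] norm_axis)
  finally show ?thesis by simp
qed

lemma skew_adjoint_unitary_diagonalization:
  assumes "skew_adjoint x"
  shows "\<exists>U (\<theta>::'n::finite \<Rightarrow> real).
    unitary U \<and> x = U ** diag_mat (\<lambda>k. \<i> * of_real (\<theta> k)) ** cadjoint U"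
proof -
  define H :: "'n cmat" where "H = (\<chi> i j. - \<i> * x $ i $ j)"
  have "cadjoint x $ i $ j = (- x) $ i $ j" for i j
    using assms by (simp add: skew_adjoint_def)
  then have "cnj (x $ j $ i) = - x $ i $ j" for i j
    by (simp add: cadjoint_def)
  then have "hermitian H"
    by (simp add: hermitian_def cadjoint_def H_def vec_eq_iff)
  then obtain U and \<theta> :: "'n \<Rightarrow> real"
    where U: "unitary U" and H: "H = U ** diag_mat (\<lambda>k. of_real (\<theta> k)) ** cadjoint U"
    using hermitian_unitary_diagonalization by blast
  have "x $ i $ j = \<i> * H $ i $ j" for i j
    by (simp add: H_def)
  also have "\<i> * H $ i $ j = (U ** diag_mat (\<lambda>k. \<i> * of_real (\<theta> k)) ** cadjoint U) $ i $ j" for i j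
    unfolding H diag_mat_conj_nth by (simp add: sum_distrib_left mult_ac)
  finally have "x = U ** diag_mat (\<lambda>k. \<i> * of_real (\<theta> k)) ** cadjoint U"
    by (simp add: vec_eq_iff)
  with U show ?thesis by (intro exI conjI)
qed

definition phase_diag :: "('n::finite \<Rightarrow> real) \<Rightarrow> real \<Rightarrow> 'n cmat" where
  "phase_diag \<theta> t = diag_mat (\<lambda>k. exp (\<i> * of_real (t * \<theta> k)))"

lemma skew_adjoint_exp_diagonalization:
  fixes x :: "'n::finite cmat"
  assumes "skew_adjoint x" "op_norm x < pi"
  obtains U \<theta> where "unitary U" "\<And>k. \<bar>\<theta> k\<bar> < pi"
    "\<And>t. mat_exp (t *\<^sub>R x) = U ** phase_diag \<theta> t ** cadjoint U"
proof -
  obtain U and \<theta> :: "'n \<Rightarrow> real"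
    where U: "unitary U" and x: "x = U ** diag_mat (\<lambda>k. \<i> * of_real (\<theta> k)) ** cadjoint U"
    using skew_adjoint_unitary_diagonalization[OF assms(1)] by blast
  have "\<bar>\<theta> k\<bar> < pi" for k
    using norm_diag_entry_le_op_norm[OF U, of "\<lambda>k. \<i> * of_real (\<theta> k)" k] assms(2) x
    by (simp add: norm_mult)
  moreover have "mat_exp (t *\<^sub>R x) = U ** phase_diag \<theta> t ** cadjoint U" for t
  proof -
    have "t *\<^sub>R (\<i> * of_real (\<theta> k)) = \<i> * of_real (t * \<theta> k)" for k
      by (simp add: scaleR_conv_of_real mult_ac)
    then show ?thesis
      unfolding x scaleR_diag_mat_conj mat_exp_unitary_diag[OF U] phase_diag_def by (simp only:)
  qed
  ultimately show ?thesis
    using U that by blast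
qed

section \<open>An arctangent integral\<close>

lemma add_mult_square_nonzero:
  fixes c :: complex
  assumes "Re c > 0" "\<alpha> \<ge> 0" "\<beta> \<ge> 0" "\<alpha> + \<beta> > 0"
  shows "of_real \<alpha> + of_real \<beta> * c\<^sup>2 \<noteq> 0"
proof
  assume eq: "of_real \<alpha> + of_real \<beta> * c\<^sup>2 = 0"
  have "Im (of_real \<alpha> + of_real \<beta> * c\<^sup>2) = 2 * \<beta> * Re c * Im c"
    by (simp add: power2_eq_square)
  with eq assms(1) have "\<beta> = 0 \<or> Im c = 0" by simp
  moreover have "Re (of_real \<alpha> + of_real \<beta> * c\<^sup>2) = \<alpha> + \<beta> * ((Re c)\<^sup>2 - (Im c)\<^sup>2)"
    by (simp add: power2_eq_square)
  ultimately show False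
  proof (elim disjE)
    assume "\<beta> = 0"
    then show False using eq assms(4) by simp
  next
    assume "Im c = 0"
    then have "\<alpha> + \<beta> * (Re c)\<^sup>2 = 0" using eq \<open>Re _ = _\<close> by simp
    moreover have "\<alpha> + \<beta> * (Re c)\<^sup>2 > 0"
      using assms by (cases "\<beta> = 0") (auto intro: add_nonneg_pos)
    ultimately show False by simp
  qed
qed

lemma Arctan_add_Arctan_inverse:
  assumes "Re z > 0"
  shows "Arctan z + Arctan (1 / z) = of_real (pi / 2)"
proof -
  define S where "S = {z::complex. Re z > 0}"
  have deriv: "((\<lambda>z. Arctan z + Arctan (1 / z)) has_field_derivative 0) (at z within S)"
    if "z \<in> S" for z
  proof -
    have z: "Re z > 0" "Re (1 / z) > 0" "z \<noteq> 0"
      using that by (auto simp: S_def Re_divide add_pos_nonneg)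
    have "1 + z\<^sup>2 \<noteq> 0"
      using add_mult_square_nonzero[OF z(1), of 1 1] by simp
    then have "inverse (1 + z\<^sup>2) + inverse (1 + (1 / z)\<^sup>2) * (- inverse (z\<^sup>2)) = 0"
      using z(3) by (simp add: field_simps power2_eq_square)
    moreover have "((\<lambda>z. Arctan z + Arctan (1 / z)) has_field_derivative
        (inverse (1 + z\<^sup>2) + inverse (1 + (1 / z)\<^sup>2) * (- inverse (z\<^sup>2)))) (at z)"
      using z by (auto intro!: derivative_eq_intros simp: power2_eq_square divide_inverse)
    ultimately show ?thesis by (simp add: has_field_derivative_at_within)
  qed
  have "convex S"
    unfolding S_def by (rule convex_halfspace_Re_gt)
  then obtain k where k: "\<forall>z\<in>S. Arctan z + Arctan (1 / z) = k"
    using has_field_derivative_zero_constant deriv by blast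
  have "1 \<in> S" by (simp add: S_def)
  with k have "Arctan 1 + Arctan (1 / 1) = k" by (rule bspec)
  then have "k = Arctan 1 + Arctan (1 / 1)" ..
  also have "\<dots> = of_real (pi / 2)"
    using Arctan_of_real[of 1] by (simp add: arctan_one mult.commute)
  finally show ?thesis
    using k assms by (simp add: S_def)
qed

lemma Arctan_sum_has_field_derivative:
  fixes c :: complex
  assumes c: "Re c > 0" and \<rho>: "\<rho> \<ge> 0"
  shows "((\<lambda>\<zeta>. (Arctan (c * \<zeta>) + Arctan (\<zeta> / c)) / c) has_field_derivative
           (1 / (1 + of_real (\<rho>\<^sup>2) * c\<^sup>2) + 1 / (of_real (\<rho>\<^sup>2) + c\<^sup>2))) (at (of_real \<rho>))"
proof -
  have "c \<noteq> 0" using c by auto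
  have P: "1 + of_real (\<rho>\<^sup>2) * c\<^sup>2 \<noteq> 0"
    using add_mult_square_nonzero[OF c, of 1 "\<rho>\<^sup>2"] by (simp add: add_pos_nonneg)
  have Q: "of_real (\<rho>\<^sup>2) + c\<^sup>2 \<noteq> 0"
    using add_mult_square_nonzero[OF c, of "\<rho>\<^sup>2" 1] by (simp add: add_nonneg_pos)
  have "Re (of_real \<rho> / c) = \<rho> * Re c / (cmod c)\<^sup>2"
    by (simp add: Re_divide cmod_power2)
  then have "Re (of_real \<rho> / c) = 0 \<Longrightarrow> \<rho> = 0"
    using c \<open>c \<noteq> 0\<close> by simp
  then have "((\<lambda>\<zeta>. (Arctan (c * \<zeta>) + Arctan (\<zeta> / c)) / c) has_field_derivative
      (inverse (1 + (c * of_real \<rho>)\<^sup>2) * c + inverse (1 + (of_real \<rho> / c)\<^sup>2) * (1 / c)) / c)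
      (at (of_real \<rho>))"
    using c \<rho> by (auto intro!: derivative_eq_intros simp: divide_inverse)
  moreover have
    "(inverse (1 + (c * of_real \<rho>)\<^sup>2) * c + inverse (1 + (of_real \<rho> / c)\<^sup>2) * (1 / c)) / c
      = 1 / (1 + of_real (\<rho>\<^sup>2) * c\<^sup>2) + 1 / (of_real (\<rho>\<^sup>2) + c\<^sup>2)"
  proof -
    have "inverse (1 + (c * of_real \<rho>)\<^sup>2) * c = c / (1 + of_real (\<rho>\<^sup>2) * c\<^sup>2)"
      by (simp add: power_mult_distrib mult.commute divide_inverse)
    moreover have "1 + (of_real \<rho> / c)\<^sup>2 = (of_real (\<rho>\<^sup>2) + c\<^sup>2) / c\<^sup>2"
      using \<open>c \<noteq> 0\<close> by (simp add: field_simps)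
    then have "inverse (1 + (of_real \<rho> / c)\<^sup>2) * (1 / c) = c / (of_real (\<rho>\<^sup>2) + c\<^sup>2)"
      using \<open>c \<noteq> 0\<close> by (simp add: power2_eq_square)
    ultimately show ?thesis
      using \<open>c \<noteq> 0\<close> by (simp add: add_divide_distrib)
  qed
  ultimately show ?thesis by simp
qed

lemma Re_Arctan_primitive_has_real_derivative:
  fixes b c :: "'i \<Rightarrow> complex"
  assumes I: "finite I" and c: "\<And>k. k \<in> I \<Longrightarrow> Re (c k) > 0" and \<rho>: "\<rho> \<ge> 0"
  shows "((\<lambda>\<rho>. Re (\<Sum>k\<in>I. b k * ((Arctan (c k * \<rho>) + Arctan (\<rho> / c k)) / c k)))
    has_real_derivative
      Re (\<Sum>k\<in>I. b k / (1 + of_real (\<rho>\<^sup>2) * (c k)\<^sup>2)) + Re (\<Sum>k\<in>I. b k / (of_real (\<rho>\<^sup>2) + (c k)\<^sup>2)))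
    (at \<rho>)"
proof -
  define G where "G \<zeta> = (\<Sum>k\<in>I. b k * ((Arctan (c k * \<zeta>) + Arctan (\<zeta> / c k)) / c k))" for \<zeta>
  define g where
    "g = (\<Sum>k\<in>I. b k * (1 / (1 + of_real (\<rho>\<^sup>2) * (c k)\<^sup>2) + 1 / (of_real (\<rho>\<^sup>2) + (c k)\<^sup>2)))"
  have "(G has_field_derivative g) (at (of_real \<rho>))"
    unfolding G_def g_def using I c \<rho>
    by (intro DERIV_sum DERIV_cmult Arctan_sum_has_field_derivative) auto
  then have "((\<lambda>\<rho>. G (of_real \<rho>)) has_vector_derivative g) (at \<rho>)"
    by (rule has_vector_derivative_real_field)
  then have "((\<lambda>\<rho>. Re (G (of_real \<rho>))) has_real_derivative Re g) (at \<rho>)"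
    by (auto intro!: derivative_eq_intros)
  moreover have "Re g = Re (\<Sum>k\<in>I. b k / (1 + of_real (\<rho>\<^sup>2) * (c k)\<^sup>2))
      + Re (\<Sum>k\<in>I. b k / (of_real (\<rho>\<^sup>2) + (c k)\<^sup>2))"
    by (simp add: g_def sum.distrib distrib_left)
  ultimately show ?thesis
    by (simp add: G_def)
qed

text \<open>For \<open>Re c > 0\<close> the primitive \<open>(Arctan (c \<rho>) + Arctan (\<rho> / c)) / c\<close> gives
  \<open>\<integral>\<^sub>0\<^sup>1 (1 / (1 + \<rho>\<^sup>2 c\<^sup>2) + 1 / (\<rho>\<^sup>2 + c\<^sup>2)) d\<rho> = \<pi> / (2 c)\<close>,
  and \<open>\<integral>\<^sub>0\<^sup>1 2 / (1 + \<rho>\<^sup>2) d\<rho> = \<pi> / 2\<close>; the hypotheses compare the integrands.\<close>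
lemma Re_sum_divide_ge_of_resolvent_bounds:
  fixes b c :: "'i \<Rightarrow> complex"
  assumes I: "finite I" and c: "\<And>k. k \<in> I \<Longrightarrow> Re (c k) > 0"
    and bound1: "\<And>\<rho>. 0 \<le> \<rho> \<Longrightarrow> \<rho> \<le> 1 \<Longrightarrow>
      A / (1 + \<rho>\<^sup>2) \<le> Re (\<Sum>k\<in>I. b k / (1 + of_real (\<rho>\<^sup>2) * (c k)\<^sup>2))"
    and bound2: "\<And>\<rho>. 0 \<le> \<rho> \<Longrightarrow> \<rho> \<le> 1 \<Longrightarrow>
      A / (1 + \<rho>\<^sup>2) \<le> Re (\<Sum>k\<in>I. b k / (of_real (\<rho>\<^sup>2) + (c k)\<^sup>2))"
  shows "A \<le> Re (\<Sum>k\<in>I. b k / c k)"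
proof -
  define \<Phi> where "\<Phi> \<rho> = Re (\<Sum>k\<in>I. b k * ((Arctan (c k * of_real \<rho>) + Arctan (of_real \<rho> / c k)) / c k))
      - 2 * A * arctan \<rho>" for \<rho>
  have \<Phi>': "(\<Phi> has_real_derivative
      Re (\<Sum>k\<in>I. b k / (1 + of_real (\<rho>\<^sup>2) * (c k)\<^sup>2)) + Re (\<Sum>k\<in>I. b k / (of_real (\<rho>\<^sup>2) + (c k)\<^sup>2))
        - 2 * A * inverse (1 + \<rho>\<^sup>2)) (at \<rho>)" if "\<rho> \<ge> 0" for \<rho>
    unfolding \<Phi>_def
    by (intro DERIV_diff DERIV_cmult DERIV_arctan Re_Arctan_primitive_has_real_derivative I c that)
  have "\<Phi> 0 \<le> \<Phi> 1"
  proof (rule DERIV_nonneg_imp_increasing_open[of 0 1 \<Phi>])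
    show "\<exists>y. (\<Phi> has_real_derivative y) (at \<rho>) \<and> 0 \<le> y" if "0 < \<rho>" "\<rho> < 1" for \<rho>
    proof (intro exI conjI)
      have "2 * A * inverse (1 + \<rho>\<^sup>2) = A / (1 + \<rho>\<^sup>2) + A / (1 + \<rho>\<^sup>2)"
        by (simp add: field_simps)
      then show "0 \<le> Re (\<Sum>k\<in>I. b k / (1 + of_real (\<rho>\<^sup>2) * (c k)\<^sup>2))
          + Re (\<Sum>k\<in>I. b k / (of_real (\<rho>\<^sup>2) + (c k)\<^sup>2)) - 2 * A * inverse (1 + \<rho>\<^sup>2)"
        using bound1[of \<rho>] bound2[of \<rho>] that by linarith
    qed (use \<Phi>' that in simp)
    show "continuous_on {0..1} \<Phi>"
      using \<Phi>' by (auto intro!: continuous_at_imp_continuous_on DERIV_isCont)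
  qed simp
  moreover have "\<Phi> 1 = pi / 2 * (Re (\<Sum>k\<in>I. b k / c k) - A)"
  proof -
    have at_1: "(\<Sum>k\<in>I. b k * ((Arctan (c k * 1) + Arctan (1 / c k)) / c k)) =
        of_real (pi / 2) * (\<Sum>k\<in>I. b k / c k)"
      using c by (simp add: Arctan_add_Arctan_inverse sum_distrib_left mult_ac)
    show ?thesis
      unfolding \<Phi>_def of_real_1 at_1 by (simp add: arctan_one algebra_simps)
  qed
  moreover have "\<Phi> 0 = 0" by (simp add: \<Phi>_def)
  ultimately show ?thesis
    using pi_gt_zero by (simp add: zero_le_mult_iff)
qed

section \<open>Midpoint convexity along the phase path\<close>

lemma quad_form_resolvent_substitution:
  fixes w :: "'n::finite cmat" and c :: "'n \<Rightarrow> complex" and \<alpha> \<beta> :: real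
  defines "D \<equiv> \<lambda>k. of_real \<alpha> + of_real \<beta> * (c k)\<^sup>2"
  assumes c: "\<And>k. cmod (c k) = 1" and D: "\<And>k. D k \<noteq> 0"
  shows "quad_form (w ** diag_mat (\<lambda>k. inverse (D k))) (\<chi> k. D k * y $ k) =
    of_real \<alpha> * quad_form w y +
    of_real \<beta> * quad_form (w ** diag_mat (\<lambda>k. (cnj (c k))\<^sup>2)) (\<chi> k. (c k)\<^sup>2 * y $ k)"
proof -
  have cc: "(cnj (c k))\<^sup>2 * (c k)\<^sup>2 = 1" for k
    using c[of k] complex_norm_square[of "c k"]
    by (simp add: power_mult_distrib[symmetric] mult.commute)
  have "cnj (D j * y $ j) * (w $ j $ k * inverse (D k)) * (D k * y $ k) =
      of_real \<alpha> * (cnj (y $ j) * w $ j $ k * y $ k) +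
      of_real \<beta> * (cnj ((c j)\<^sup>2 * y $ j) * (w $ j $ k * (cnj (c k))\<^sup>2) * ((c k)\<^sup>2 * y $ k))" for j k
  proof -
    have "cnj (D j * y $ j) * (w $ j $ k * inverse (D k)) * (D k * y $ k) =
        cnj (D j) * cnj (y $ j) * w $ j $ k * y $ k"
      using D[of k] by (simp add: field_simps)
    also have "\<dots> = of_real \<alpha> * (cnj (y $ j) * w $ j $ k * y $ k) +
        of_real \<beta> * (cnj ((c j)\<^sup>2 * y $ j) * (w $ j $ k * (cnj (c k))\<^sup>2) * ((c k)\<^sup>2 * y $ k))"
      using cc[of k] by (simp add: D_def algebra_simps)
    finally show ?thesis .
  qed
  then show ?thesis
    unfolding quad_form_def matrix_mul_diag_mat_nth vec_lambda_beta
    by (simp add: sum.distrib sum_distrib_left)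
qed

text \<open>Substituting \<open>z = (\<alpha> + \<beta> c\<^sup>2) y\<close> entrywise turns the form into a positive
  combination of the forms of \<open>w\<close> and \<open>w diag (cnj c\<^sup>2)\<close> at vectors of norm \<open>|y|\<close>,
  while \<open>|z| \<le> (\<alpha> + \<beta>) |y|\<close>.\<close>
lemma num_range_Re_ge_resolvent:
  fixes w :: "'n::finite cmat" and c :: "'n \<Rightarrow> complex"
  assumes a: "a \<ge> 0" and \<alpha>\<beta>: "\<alpha> \<ge> 0" "\<beta> \<ge> 0" "\<alpha> + \<beta> > 0"
    and c: "\<And>k. cmod (c k) = 1" "\<And>k. Re (c k) > 0"
    and w0: "num_range_Re_ge a w" and w1: "num_range_Re_ge a (w ** diag_mat (\<lambda>k. (cnj (c k))\<^sup>2))"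
  shows "a * (norm z)\<^sup>2 / (\<alpha> + \<beta>) \<le>
    Re (quad_form (w ** diag_mat (\<lambda>k. inverse (of_real \<alpha> + of_real \<beta> * (c k)\<^sup>2))) z)"
proof -
  define D where "D k = of_real \<alpha> + of_real \<beta> * (c k)\<^sup>2" for k
  have D: "D k \<noteq> 0" for k
    unfolding D_def using add_mult_square_nonzero[OF c(2) \<alpha>\<beta>] .
  define y :: "complex^'n" where "y = (\<chi> k. z $ k / D k)"
  define y' :: "complex^'n" where "y' = (\<chi> k. (c k)\<^sup>2 * y $ k)"
  have "z = (\<chi> k. D k * y $ k)"
    using D by (simp add: y_def vec_eq_iff)
  then have split: "quad_form (w ** diag_mat (\<lambda>k. inverse (D k))) z =
      of_real \<alpha> * quad_form w y + of_real \<beta> * quad_form (w ** diag_mat (\<lambda>k. (cnj (c k))\<^sup>2)) y'"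
    using quad_form_resolvent_substitution[of c \<alpha> \<beta> w y] c(1) D
    unfolding D_def[abs_def] y'_def by simp
  have "norm y' = norm y"
    using c(1) by (simp add: norm_vec_def y'_def norm_mult norm_power)
  have "norm z \<le> norm ((\<alpha> + \<beta>) *\<^sub>R y)"
  proof (rule norm_le_componentwise_cart)
    fix k
    have "norm (z $ k) = cmod (D k) * norm (y $ k)"
      using D[of k] by (simp add: y_def norm_divide)
    also have "\<dots> \<le> (\<alpha> + \<beta>) * norm (y $ k)"
      using norm_triangle_ineq[of "of_real \<alpha>" "of_real \<beta> * (c k)\<^sup>2"] c(1)[of k] \<alpha>\<beta>
      by (intro mult_right_mono) (simp_all add: D_def norm_mult norm_power)
    also have "\<dots> = norm (((\<alpha> + \<beta>) *\<^sub>R y) $ k)"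
      using \<alpha>\<beta> by simp
    finally show "norm (z $ k) \<le> norm (((\<alpha> + \<beta>) *\<^sub>R y) $ k)" .
  qed
  then have "a * (norm z)\<^sup>2 \<le> a * ((\<alpha> + \<beta>) * norm y)\<^sup>2"
    using a \<alpha>\<beta> by (intro mult_left_mono power_mono) auto
  then have "a * (norm z)\<^sup>2 / (\<alpha> + \<beta>) \<le> (\<alpha> + \<beta>) * (a * (norm y)\<^sup>2)"
    using \<alpha>\<beta> by (simp add: divide_le_eq power2_eq_square mult_ac)
  also have "\<dots> = \<alpha> * (a * (norm y)\<^sup>2) + \<beta> * (a * (norm y')\<^sup>2)"
    using \<open>norm y' = norm y\<close> by (simp add: algebra_simps)
  also have "\<dots> \<le> Re (quad_form (w ** diag_mat (\<lambda>k. inverse (D k))) z)"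
    unfolding split using w0 w1 \<alpha>\<beta>
    by (simp add: num_range_Re_ge_def add_mono mult_left_mono)
  finally show ?thesis by (simp add: D_def)
qed

lemma num_range_Re_ge_midpoint_diag:
  fixes w :: "'n::finite cmat" and u :: "'n \<Rightarrow> complex"
  assumes a: "a \<ge> 0" and u: "\<And>k. cmod (u k) = 1" "\<And>k. Re (u k) > 0"
    and w0: "num_range_Re_ge a w" and w1: "num_range_Re_ge a (w ** diag_mat (\<lambda>k. (u k)\<^sup>2))"
  shows "num_range_Re_ge a (w ** diag_mat u)"
  unfolding num_range_Re_ge_def
proof
  fix z :: "complex^'n"
  define c where "c k = cnj (u k)" for k
  have c: "cmod (c k) = 1" "Re (c k) > 0" for k
    using u by (simp_all add: c_def)
  have w1': "num_range_Re_ge a (w ** diag_mat (\<lambda>k. (cnj (c k))\<^sup>2))"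
    using w1 by (simp add: c_def)
  define b where "b k = (\<Sum>j\<in>UNIV. cnj (z $ j) * w $ j $ k) * z $ k" for k
  have form: "quad_form (w ** diag_mat d) z = (\<Sum>k\<in>UNIV. b k * d k)" for d
    by (simp add: quad_form_mult_diag_mat b_def)
  have "a * (norm z)\<^sup>2 \<le> Re (\<Sum>k\<in>UNIV. b k / c k)"
  proof (rule Re_sum_divide_ge_of_resolvent_bounds[OF finite_class.finite_UNIV c(2)])
    fix \<rho> :: real assume "0 \<le> \<rho>"
    show "a * (norm z)\<^sup>2 / (1 + \<rho>\<^sup>2) \<le> Re (\<Sum>k\<in>UNIV. b k / (1 + of_real (\<rho>\<^sup>2) * (c k)\<^sup>2))"
      using num_range_Re_ge_resolvent[OF a _ _ _ c w0 w1', of 1 "\<rho>\<^sup>2" z]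
      unfolding form by (simp add: divide_inverse add_pos_nonneg)
    show "a * (norm z)\<^sup>2 / (1 + \<rho>\<^sup>2) \<le> Re (\<Sum>k\<in>UNIV. b k / (of_real (\<rho>\<^sup>2) + (c k)\<^sup>2))"
      using num_range_Re_ge_resolvent[OF a _ _ _ c w0 w1', of "\<rho>\<^sup>2" 1 z]
      unfolding form by (simp add: divide_inverse add.commute[of "\<rho>\<^sup>2"] add_pos_nonneg)
  qed
  moreover have "b k / c k = b k * u k" for k
  proof -
    have "cnj (u k) * u k = 1"
      using u(1)[of k] complex_norm_square[of "u k"] by (simp add: mult.commute)
    then have "inverse (c k) = u k" by (simp add: c_def inverse_unique)
    then show ?thesis by (simp add: divide_inverse)
  qed
  ultimately show "a * (norm z)\<^sup>2 \<le> Re (quad_form (w ** diag_mat u) z)"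
    by (simp add: form)
qed

lemma phase_diag_add: "phase_diag \<theta> s ** phase_diag \<theta> t = phase_diag \<theta> (s + t)"
  by (simp add: phase_diag_def diag_mat_mult exp_add[symmetric] algebra_simps)

lemma phase_diag_0: "phase_diag \<theta> 0 = mat 1"
  by (simp add: phase_diag_def diag_mat_one)

lemma unitary_phase_diag: "unitary (phase_diag \<theta> t)"
  unfolding phase_diag_def by (rule unitary_diag_mat) simp

text \<open>The half-step phases \<open>e\<^sup>i\<^sup>h\<^sup>\<theta>\<close> have \<open>|h \<theta>| < \<pi>/2\<close>, hence positive real part:
  this is where \<open>|\<theta>| < \<pi>\<close> is used.\<close>
lemma num_range_Re_ge_phase_midpoint:
  fixes w :: "'n::finite cmat" and \<theta> :: "'n \<Rightarrow> real"
  assumes a: "a \<ge> 0" and \<theta>: "\<And>k. \<bar>\<theta> k\<bar> < pi" and st: "s \<le> t" "t - s \<le> 1"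
    and s: "num_range_Re_ge a (w ** phase_diag \<theta> s)"
    and t: "num_range_Re_ge a (w ** phase_diag \<theta> t)"
  shows "num_range_Re_ge a (w ** phase_diag \<theta> ((s + t) / 2))"
proof -
  define h where "h = (t - s) / 2"
  define u where "u k = exp (\<i> * of_real (h * \<theta> k))" for k
  have "Re (u k) > 0" for k
  proof -
    have "\<bar>h\<bar> \<le> 1 / 2" using st by (simp add: h_def)
    then have "\<bar>h * \<theta> k\<bar> \<le> 1 / 2 * \<bar>\<theta> k\<bar>"
      unfolding abs_mult by (rule mult_right_mono) simp
    also have "\<dots> < pi / 2" using \<theta>[of k] by simp
    finally show ?thesis
      by (simp add: u_def Re_exp cos_gt_zero_pi abs_less_iff)
  qed
  moreover have "cmod (u k) = 1" for k by (simp add: u_def)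
  moreover have "diag_mat (\<lambda>k. (u k)\<^sup>2) = phase_diag \<theta> (t - s)"
    by (simp add: u_def h_def phase_diag_def exp_add[symmetric] power2_eq_square algebra_simps)
  moreover have "num_range_Re_ge a (w ** phase_diag \<theta> s ** phase_diag \<theta> (t - s))"
    using t by (simp add: phase_diag_add flip: matrix_mul_assoc)
  ultimately have "num_range_Re_ge a (w ** phase_diag \<theta> s ** diag_mat u)"
    using num_range_Re_ge_midpoint_diag[OF a _ _ s] by simp
  moreover have "diag_mat u = phase_diag \<theta> h"
    by (simp add: u_def[abs_def] phase_diag_def)
  ultimately show ?thesis
    by (simp add: h_def phase_diag_add field_simps flip: matrix_mul_assoc)
qed

lemma dyadic_mem_if_midpoint_closed:
  fixes S :: "real set"
  assumes "0 \<in> S" "1 \<in> S"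
    and mid: "\<And>s t. s \<in> S \<Longrightarrow> t \<in> S \<Longrightarrow> 0 \<le> s \<Longrightarrow> s \<le> t \<Longrightarrow> t \<le> 1 \<Longrightarrow> (s + t) / 2 \<in> S"
    and "m \<le> 2 ^ n"
  shows "real m / 2 ^ n \<in> S"
  using assms(4)
proof (induction n arbitrary: m)
  case 0
  then have "m = 0 \<or> m = 1" by auto
  then show ?case using assms(1,2) by auto
next
  case (Suc n)
  show ?case
  proof (cases "even m")
    case True
    then obtain l where "m = 2 * l" by blast
    with Suc.prems Suc.IH[of l] show ?thesis by simp
  next
    case False
    then obtain l where l: "m = 2 * l + 1" using oddE by blast
    with Suc.prems have "l + 1 \<le> 2 ^ n" by simp
    then have "real l / 2 ^ n \<in> S" "real (l + 1) / 2 ^ n \<in> S" "real (l + 1) \<le> 2 ^ n"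
      using Suc.IH[of l] Suc.IH[of "l + 1"] by (simp_all only: le_SucI Suc_eq_plus1 [symmetric])
        (metis of_nat_le_iff of_nat_numeral of_nat_power)
    then have "(real l / 2 ^ n + real (l + 1) / 2 ^ n) / 2 \<in> S"
      by (intro mid) (simp_all add: divide_right_mono)
    then show ?thesis by (simp add: l field_simps)
  qed
qed

lemma unit_interval_subset_if_midpoint_closed:
  fixes S :: "real set"
  assumes closed: "closed S" and "0 \<in> S" "1 \<in> S"
    and mid: "\<And>s t. s \<in> S \<Longrightarrow> t \<in> S \<Longrightarrow> 0 \<le> s \<Longrightarrow> s \<le> t \<Longrightarrow> t \<le> 1 \<Longrightarrow> (s + t) / 2 \<in> S"
  shows "{0..1} \<subseteq> S"
proof
  fix t :: real assume t: "t \<in> {0..1}"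
  define m where "m n = nat \<lfloor>t * 2 ^ n\<rfloor>" for n :: nat
  have m: "real (m n) = of_int \<lfloor>t * 2 ^ n\<rfloor>" for n
    using t by (simp add: m_def)
  have "m n \<le> 2 ^ n" for n
    using t floor_mono[of "t * 2 ^ n" "2 ^ n"] by (simp add: m_def nat_le_iff)
  then have "real (m n) / 2 ^ n \<in> S" for n
    using dyadic_mem_if_midpoint_closed[OF assms(2,3) mid] by blast
  moreover have "(\<lambda>n. real (m n) / 2 ^ n) \<longlonglongrightarrow> t"
  proof (rule tendsto_sandwich[of "\<lambda>n. t - inverse (2 ^ n)" _ _ "\<lambda>n. t"])
    have "t - inverse (2 ^ n) \<le> real (m n) / 2 ^ n" for n
    proof -
      have "t - inverse (2 ^ n) = (t * 2 ^ n - 1) / 2 ^ n" by (simp add: field_simps)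
      also have "\<dots> \<le> real (m n) / 2 ^ n"
        unfolding m by (rule divide_right_mono) simp_all
      finally show ?thesis .
    qed
    then show "\<forall>\<^sub>F n in sequentially. t - inverse (2 ^ n) \<le> real (m n) / 2 ^ n"
      by simp
    show "\<forall>\<^sub>F n in sequentially. real (m n) / 2 ^ n \<le> t"
      by (simp add: m field_simps)
    have "(\<lambda>n. inverse ((2::real) ^ n)) \<longlonglongrightarrow> 0"
      by (rule LIMSEQ_inverse_realpow_zero) simp
    then show "(\<lambda>n. t - inverse ((2::real) ^ n)) \<longlonglongrightarrow> t"
      by (auto intro: tendsto_eq_intros)
  qed simp
  ultimately show "t \<in> S"
    by (rule closed_sequentially[OF closed])
qed

lemma closed_num_range_Re_ge_phase: "closed {t. num_range_Re_ge a (w ** phase_diag \<theta> t)}"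
proof -
  have "{t. num_range_Re_ge a (w ** phase_diag \<theta> t)} =
      (\<Inter>z. {t. a * (norm z)\<^sup>2 \<le> Re (quad_form (w ** phase_diag \<theta> t) z)})"
    by (auto simp: num_range_Re_ge_def)
  moreover have "closed {t. a * (norm z)\<^sup>2 \<le> Re (quad_form (w ** phase_diag \<theta> t) z)}" for z
    unfolding phase_diag_def quad_form_mult_diag_mat
    by (intro closed_Collect_le continuous_intros)
  ultimately show ?thesis by auto
qed

lemma num_range_Re_ge_phase_path:
  assumes a: "a \<ge> 0" and \<theta>: "\<And>k. \<bar>\<theta> k\<bar> < pi"
    and w0: "num_range_Re_ge a w" and w1: "num_range_Re_ge a (w ** phase_diag \<theta> 1)"
    and t: "t \<in> {0..1}"
  shows "num_range_Re_ge a (w ** phase_diag \<theta> t)"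
proof -
  have "{0..1} \<subseteq> {t. num_range_Re_ge a (w ** phase_diag \<theta> t)}"
  proof (rule unit_interval_subset_if_midpoint_closed)
    show "0 \<in> {t. num_range_Re_ge a (w ** phase_diag \<theta> t)}"
      using w0 by (simp add: phase_diag_0)
    show "(s + t) / 2 \<in> {t. num_range_Re_ge a (w ** phase_diag \<theta> t)}"
      if "s \<in> {t. num_range_Re_ge a (w ** phase_diag \<theta> t)}"
        and "t \<in> {t. num_range_Re_ge a (w ** phase_diag \<theta> t)}" and "0 \<le> s" "s \<le> t" "t \<le> 1"
      for s t
      using num_range_Re_ge_phase_midpoint[of a \<theta> s t w] a \<theta> that by simp
  qed (use w1 closed_num_range_Re_ge_phase in auto)
  with t show ?thesis by blast
qed

theorem corollary3p6:
  fixes c :: real and v x :: "complex^'n::finite^'n"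
  assumes "c \<ge> 0"
    and "unitary v"
    and "skew_adjoint x"
    and "op_norm x < pi"
    and "loewner_ge (v + matrix_inv v) (c *\<^sub>R mat 1)"
    and "loewner_ge (v ** mat_exp x + matrix_inv (v ** mat_exp x)) (c *\<^sub>R mat 1)"
  shows "\<forall>t\<in>{0..1::real}.
    loewner_ge (v ** mat_exp (t *\<^sub>R x) + matrix_inv (v ** mat_exp (t *\<^sub>R x))) (c *\<^sub>R mat 1)"
proof
  fix t :: real assume t: "t \<in> {0..1}"
  obtain U \<theta> where U: "unitary U" and \<theta>: "\<And>k. \<bar>\<theta> k\<bar> < pi"
    and exp: "\<And>s. mat_exp (s *\<^sub>R x) = U ** phase_diag \<theta> s ** cadjoint U"
    using skew_adjoint_exp_diagonalization[OF assms(3,4)] by blast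
  define w where "w = cadjoint U ** v ** U"
  have v: "v = U ** w ** cadjoint U"
    unfolding w_def using unitary_conj_cancel[OF U] by simp
  have v_exp: "v ** mat_exp (s *\<^sub>R x) = U ** (w ** phase_diag \<theta> s) ** cadjoint U" for s
    unfolding exp v by (rule unitary_conj_mult[OF U])
  have unitary_w: "unitary (w ** phase_diag \<theta> s)" for s
    using assms(2) U by (simp add: w_def unitary_matrix_mul unitary_cadjoint unitary_phase_diag)
  have "num_range_Re_ge (c / 2) w"
    using assms(5) loewner_ge_unitary_conj_iff[OF U unitary_w[of 0]] by (simp add: v phase_diag_0)
  moreover have "num_range_Re_ge (c / 2) (w ** phase_diag \<theta> 1)"
    using assms(6) loewner_ge_unitary_conj_iff[OF U unitary_w[of 1]] v_exp[of 1] by simp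
  ultimately have "num_range_Re_ge (c / 2) (w ** phase_diag \<theta> t)"
    using num_range_Re_ge_phase_path[of "c / 2" \<theta> w t] assms(1) \<theta> t by simp
  then show
    "loewner_ge (v ** mat_exp (t *\<^sub>R x) + matrix_inv (v ** mat_exp (t *\<^sub>R x))) (c *\<^sub>R mat 1)"
    unfolding v_exp using loewner_ge_unitary_conj_iff[OF U unitary_w] by simp
qed

end
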